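(* Suppose $F$ is locally Lipschitz continuous, in the sense that there is $L>0$ such that for every $x \in X$ there is a neighborhood $B_x\subset X$ of $x$ with $\|F(u) - F(v)\|_* \le L\|u - v\|$ for all $u, v \in B_x$. Then, regardless of the choice of the distance generating function $\omega$, the line search procedure in the N-EG-LS method is well-defined. Moreover, if $F$ is Lipschitz continuous, i.e. $\|F(x)-F(y)\|_*\le L\|x-y\|$ for all $x,y\in X$, then the line search procedure terminates in at most \[ \max\left\{1, \log_{1/\lambda}\frac{\alpha}{\sqrt{2}\gamma_0 L}\right\} \] steps, and \[ \gamma_k \ge \min\left\{\frac{\lambda\alpha}{\sqrt{2}L}, \gamma_0\right\} \quad \forall k\ge 1. \]
   Context: $\mathbb{R}^n$ carries an inner product $\langle\cdot,\cdot\rangle$ and a norm $\|\cdot\|$ (not necessarily induced by the inner product), with dual norm $\|\cdot\|_*$. $X \subseteq \mathbb{R}^n$ is a nonempty closed convex set and $F: X \to \mathbb{R}^n$ is continuous. A distance generating function with modulus $\alpha>0$ w.r.t. $\|\cdot\|$ is a function $\omega: X \to \mathbb{R}$ that is convex and continuous on $X$, such that $X^o = \{x \in X : \partial\omega(x) \neq \emptyset\}$ is convex, and such that $\omega$ restricted to $X^o$ is continuously differentiable and satisfies $\langle \nabla\omega(x') - \nabla\omega(x), x' - x\rangle \ge \alpha\|x'-x\|^2$ for all $x, x' \in X^o$. $V(x,z) = \omega(z) - \omega(x) - \langle \nabla\omega(x), z - x\rangle$, $P_x(\phi) = \arg\min_{z \in X}\{\langle \phi, z\rangle + V(x,z)\}$,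 $R_\gamma(x) = \frac{1}{\gamma}[x - P_x(\gamma F(x))]$. N-EG-LS method: input $x_1\in X$, $\gamma_0\in(0,1)$, $\lambda\in(0,1)$. For $k = 1,2,\ldots$: (Step 1) compute $R_{\gamma_0}(x_k)$; if $\|R_{\gamma_0}(x_k)\| = 0$ terminate; otherwise choose $\gamma_k$ as the largest element of $\{\gamma_0, \gamma_0\lambda, \gamma_0\lambda^2,\ldots\}$ such that $\|F(x_k) - F(y_k)\|_*^2 \le \frac{\alpha}{\gamma_k^2}V(x_k,y_k)$, where $y_k = P_{x_k}(\gamma_k F(x_k))$; then set $x_{k+1} = P_{x_k}(\gamma_k F(y_k))$. The line search procedure is called well-defined if (a) for every $k\ge1$ the choice of $\gamma_k$ above terminates after finitely many trial values, and (b) there exist $K\in\mathbb{N}$ and $\gamma^*>0$ with $\gamma_k \ge \gamma^*$ for all $k \ge K$. *)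

theory Defs
  imports "HOL-Analysis.Analysis"
begin

definition is_norm :: "('a::real_vector \<Rightarrow> real) \<Rightarrow> bool" where
  "is_norm N \<longleftrightarrow> (\<forall>x. N x = 0 \<longleftrightarrow> x = 0) \<and> (\<forall>c x. N (c *\<^sub>R x) = \<bar>c\<bar> * N x)
     \<and> (\<forall>x y. N (x + y) \<le> N x + N y)"

definition dual_norm :: "('a::real_inner \<Rightarrow> real) \<Rightarrow> 'a \<Rightarrow> real" where
  "dual_norm N \<phi> = Sup {inner \<phi> x | x. N x \<le> 1}"

definition subdiff :: "'a::real_inner set \<Rightarrow> ('a \<Rightarrow> real) \<Rightarrow> 'a \<Rightarrow> 'a set" where
  "subdiff X f x = {g. \<forall>z\<in>X. f z \<ge> f x + inner g (z - x)}"

definition dom_sub :: "'a::real_inner set \<Rightarrow> ('a \<Rightarrow> real) \<Rightarrow> 'a set" where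
  "dom_sub X \<omega> = {x \<in> X. subdiff X \<omega> x \<noteq> {}}"

text \<open>Distance generating function with modulus \<alpha> w.r.t. N; dw is the gradient of \<omega> on X^o.\<close>
definition dgf :: "'a::euclidean_space set \<Rightarrow> ('a \<Rightarrow> real) \<Rightarrow> real \<Rightarrow> ('a \<Rightarrow> real) \<Rightarrow> ('a \<Rightarrow> 'a) \<Rightarrow> bool" where
  "dgf X N \<alpha> \<omega> dw \<longleftrightarrow> \<alpha> > 0 \<and> convex_on X \<omega> \<and> continuous_on X \<omega> \<and> convex (dom_sub X \<omega>)
     \<and> (\<forall>x\<in>dom_sub X \<omega>. (\<omega> has_derivative (\<lambda>h. inner (dw x) h)) (at x within dom_sub X \<omega>)
                         \<and> dw x \<in> subdiff X \<omega> x)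
     \<and> continuous_on (dom_sub X \<omega>) dw
     \<and> (\<forall>x\<in>dom_sub X \<omega>. \<forall>x'\<in>dom_sub X \<omega>. inner (dw x' - dw x) (x' - x) \<ge> \<alpha> * (N (x' - x))\<^sup>2)"

definition bregman :: "('a::real_inner \<Rightarrow> real) \<Rightarrow> ('a \<Rightarrow> 'a) \<Rightarrow> 'a \<Rightarrow> 'a \<Rightarrow> real" where
  "bregman \<omega> dw x z = \<omega> z - \<omega> x - inner (dw x) (z - x)"

definition prox :: "'a::real_inner set \<Rightarrow> ('a \<Rightarrow> real) \<Rightarrow> ('a \<Rightarrow> 'a) \<Rightarrow> 'a \<Rightarrow> 'a \<Rightarrow> 'a" where
  "prox X \<omega> dw x \<phi> = arg_min_on (\<lambda>z. inner \<phi> z + bregman \<omega> dw x z) X"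

definition resid :: "'a::real_inner set \<Rightarrow> ('a \<Rightarrow> real) \<Rightarrow> ('a \<Rightarrow> 'a) \<Rightarrow> ('a \<Rightarrow> 'a) \<Rightarrow> real \<Rightarrow> 'a \<Rightarrow> 'a" where
  "resid X \<omega> dw F \<gamma> x = (1 / \<gamma>) *\<^sub>R (x - prox X \<omega> dw x (\<gamma> *\<^sub>R F x))"

definition ls_cond :: "'a::real_inner set \<Rightarrow> ('a \<Rightarrow> real) \<Rightarrow> real \<Rightarrow> ('a \<Rightarrow> real) \<Rightarrow> ('a \<Rightarrow> 'a) \<Rightarrow> ('a \<Rightarrow> 'a) \<Rightarrow> 'a \<Rightarrow> real \<Rightarrow> bool" where
  "ls_cond X N \<alpha> \<omega> dw F x \<gamma> \<longleftrightarrow>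
     (let y = prox X \<omega> dw x (\<gamma> *\<^sub>R F x) in
       (dual_norm N (F x - F y))\<^sup>2 \<le> \<alpha> / \<gamma>\<^sup>2 * bregman \<omega> dw x y)"

text \<open>xs, gs is the run of N-EG-LS (indices k \<ge> 1); step k is executed iff no earlier
  termination test fired.\<close>
definition active :: "'a::real_inner set \<Rightarrow> ('a \<Rightarrow> real) \<Rightarrow> ('a \<Rightarrow> real) \<Rightarrow> ('a \<Rightarrow> 'a) \<Rightarrow> ('a \<Rightarrow> 'a) \<Rightarrow> real \<Rightarrow> (nat \<Rightarrow> 'a) \<Rightarrow> nat \<Rightarrow> bool" where
  "active X N \<omega> dw F \<gamma>0 xs k \<longleftrightarrow> k \<ge> 1 \<and> (\<forall>j\<in>{1..k}. N (resid X \<omega> dw F \<gamma>0 (xs j)) \<noteq> 0)"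

definition neg_ls_run :: "'a::real_inner set \<Rightarrow> ('a \<Rightarrow> real) \<Rightarrow> real \<Rightarrow> ('a \<Rightarrow> real) \<Rightarrow> ('a \<Rightarrow> 'a) \<Rightarrow> ('a \<Rightarrow> 'a)
     \<Rightarrow> 'a \<Rightarrow> real \<Rightarrow> real \<Rightarrow> (nat \<Rightarrow> 'a) \<Rightarrow> (nat \<Rightarrow> real) \<Rightarrow> bool" where
  "neg_ls_run X N \<alpha> \<omega> dw F x1 \<gamma>0 lam xs gs \<longleftrightarrow> xs 1 = x1 \<and>
     (\<forall>k. active X N \<omega> dw F \<gamma>0 xs k \<longrightarrow>
        gs k = (GREATEST g. g \<in> range (\<lambda>m::nat. \<gamma>0 * lam ^ m) \<and> ls_cond X N \<alpha> \<omega> dw F (xs k) g)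
      \<and> xs (Suc k) = prox X \<omega> dw (xs k) (gs k *\<^sub>R F (prox X \<omega> dw (xs k) (gs k *\<^sub>R F (xs k)))))"

end

theory Submission
  imports Defs
begin

text \<open>
  Everything rests on the strong convexity of the Bregman distance,
  \<open>V(x, z) \<ge> \<alpha>/2 N(z - x)\<^sup>2\<close> for \<open>x \<in> X\<^sup>o = dom_sub X \<omega>\<close> and \<open>z \<in> X\<close>. For \<open>z \<in> X\<^sup>o\<close> it
  follows by adding up the subgradient inequalities of \<open>\<omega>\<close> along the segment from \<open>x\<close> to \<open>z\<close>
  and using the strong monotonicity of \<open>\<nabla>\<omega>\<close>; it extends to all of \<open>X\<close> because \<open>X\<^sup>o\<close> is dense
  in \<open>X\<close>: the minimizer of \<open>\<omega> + |\<cdot> - w|\<^sup>2/(2\<epsilon>)\<close> lies in \<open>X\<^sup>o\<close> and tends to \<open>w\<close> as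
  \<open>\<epsilon> \<rightarrow> 0\<close>. Strong convexity makes the prox subproblems coercive, so \<open>P\<^sub>x\<close> is well defined
  and maps into \<open>X\<^sup>o\<close>, and all iterates stay in \<open>X\<^sup>o\<close>. If \<open>F\<close> is \<open>L\<close>-Lipschitz, then
  \<open>N\<^sub>*(F x - F y)\<^sup>2 \<le> L\<^sup>2 N(x - y)\<^sup>2 \<le> (2 L\<^sup>2 / \<alpha>) V(x, y)\<close>, so the test accepts every
  \<open>\<gamma> \<le> \<alpha> / (\<surd>2 L)\<close>; this bounds the number of backtracking steps and gives
  \<open>\<gamma>\<^sub>k \<ge> min (\<lambda>\<alpha> / (\<surd>2 L)) \<gamma>\<^sub>0\<close>. Local Lipschitz continuity with a uniform constant is
  global on the convex set \<open>X\<close>, by a Lebesgue-number argument along segments.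
\<close>

section \<open>Norms and dual norms\<close>

lemma is_norm_0: "is_norm N \<Longrightarrow> N 0 = 0"
  by (simp add: is_norm_def)

lemma is_norm_scaleR: "is_norm N \<Longrightarrow> N (c *\<^sub>R x) = \<bar>c\<bar> * N x"
  by (simp add: is_norm_def)

lemma is_norm_triangle: "is_norm N \<Longrightarrow> N (x + y) \<le> N x + N y"
  by (simp add: is_norm_def)

lemma is_norm_minus_commute: "is_norm N \<Longrightarrow> N (x - y) = N (y - x)"
  using is_norm_scaleR[of N "-1" "x - y"] by simp

lemma is_norm_nonneg: "is_norm N \<Longrightarrow> 0 \<le> N x"
  using is_norm_triangle[of N x "-x"] is_norm_minus_commute[of N x 0] is_norm_0[of N] by simp

lemma is_norm_pos: "is_norm N \<Longrightarrow> x \<noteq> 0 \<Longrightarrow> 0 < N x"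
  using is_norm_nonneg[of N x] by (auto simp: is_norm_def order_le_less)

lemma is_norm_convex_on:
  fixes N :: "'a::real_vector \<Rightarrow> real"
  assumes "is_norm N" shows "convex_on UNIV N"
proof (rule convex_onI)
  fix t :: real and x y :: 'a assume "0 < t" "t < 1"
  then show "N ((1 - t) *\<^sub>R x + t *\<^sub>R y) \<le> (1 - t) * N x + t * N y"
    using is_norm_triangle[of N "(1 - t) *\<^sub>R x" "t *\<^sub>R y"] assms by (simp add: is_norm_scaleR)
qed simp

lemma is_norm_continuous_on:
  fixes N :: "'a::euclidean_space \<Rightarrow> real"
  assumes "is_norm N" shows "continuous_on UNIV N"
  using convex_on_continuous[OF open_UNIV is_norm_convex_on[OF assms]] .

lemma is_norm_ge_norm:
  fixes N :: "'a::euclidean_space \<Rightarrow> real"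
  assumes norm: "is_norm N"
  obtains c where "0 < c" "\<And>x. c * norm x \<le> N x"
proof -
  have "sphere (0::'a) 1 \<noteq> {}" by (simp add: sphere_eq_empty)
  then obtain u where u: "u \<in> sphere 0 1" and min: "\<And>v. v \<in> sphere 0 1 \<Longrightarrow> N u \<le> N v"
    using continuous_attains_inf[OF compact_sphere _ continuous_on_subset[OF is_norm_continuous_on[OF norm]]]
    by blast
  have "0 < N u" using u by (intro is_norm_pos[OF norm]) auto
  moreover have "N u * norm x \<le> N x" for x
  proof (cases "x = 0")
    case False
    then have "N u \<le> N ((1 / norm x) *\<^sub>R x)" by (intro min) simp
    then show ?thesis using False by (simp add: is_norm_scaleR[OF norm] field_simps)
  qed (simp add: is_norm_0[OF norm])
  ultimately show thesis by (rule that)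
qed

lemma bdd_above_dual_norm_set:
  fixes N :: "'a::euclidean_space \<Rightarrow> real"
  assumes norm: "is_norm N" shows "bdd_above {inner p x | x. N x \<le> 1}"
proof -
  obtain c where c: "0 < c" "\<And>x. c * norm x \<le> N x" using is_norm_ge_norm[OF norm] by blast
  have "inner p x \<le> norm p / c" if "N x \<le> 1" for x
  proof -
    have "norm x \<le> 1 / c" using c(2)[of x] that c(1) by (simp add: field_simps)
    then have "norm p * norm x \<le> norm p / c" by (simp add: mult_left_mono divide_inverse)
    then show ?thesis using norm_cauchy_schwarz[of p x] by linarith
  qed
  then show ?thesis by (intro bdd_aboveI[where M = "norm p / c"]) auto
qed

lemma inner_le_dual_norm:
  fixes N :: "'a::euclidean_space \<Rightarrow> real"
  assumes "is_norm N" "N x \<le> 1" shows "inner p x \<le> dual_norm N p"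
  unfolding dual_norm_def using assms by (intro cSup_upper bdd_above_dual_norm_set) auto

lemma dual_norm_nonneg:
  fixes N :: "'a::euclidean_space \<Rightarrow> real"
  assumes "is_norm N" shows "0 \<le> dual_norm N p"
  using inner_le_dual_norm[OF assms, of 0 p] by (simp add: is_norm_0[OF assms])

lemma dual_norm_0:
  fixes N :: "'a::euclidean_space \<Rightarrow> real"
  assumes "is_norm N" shows "dual_norm N 0 = 0"
proof -
  have "{inner 0 x | x::'a. N x \<le> 1} = {0}" using is_norm_0[OF assms] by (auto intro!: exI[of _ 0])
  then show ?thesis by (simp add: dual_norm_def)
qed

lemma dual_norm_triangle:
  fixes N :: "'a::euclidean_space \<Rightarrow> real"
  assumes "is_norm N" shows "dual_norm N (p + q) \<le> dual_norm N p + dual_norm N q"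
  unfolding dual_norm_def[of N "p + q"]
proof (rule cSup_least)
  show "{inner (p + q) x |x. N x \<le> 1} \<noteq> {}" using is_norm_0[OF assms] by (auto intro!: exI[of _ 0])
qed (auto simp: inner_add_left intro: add_mono inner_le_dual_norm[OF assms])

lemma dual_norm_telescope_le:
  fixes N :: "'a::euclidean_space \<Rightarrow> real" and g :: "nat \<Rightarrow> 'a"
  assumes norm: "is_norm N" and step: "\<And>j. j < n \<Longrightarrow> dual_norm N (g j - g (Suc j)) \<le> B"
  shows "dual_norm N (g 0 - g n) \<le> real n * B"
  using step
proof (induction n)
  case (Suc n)
  have "dual_norm N (g 0 - g (Suc n)) \<le> dual_norm N (g 0 - g n) + dual_norm N (g n - g (Suc n))"
    using dual_norm_triangle[OF norm, of "g 0 - g n" "g n - g (Suc n)"] by simp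
  also have "\<dots> \<le> real n * B + B" using Suc by (intro add_mono) auto
  finally show ?case by (simp add: algebra_simps)
qed (simp add: dual_norm_0[OF norm])

section \<open>Local and global Lipschitz continuity\<close>

lemma grid_mem_closed_segment:
  fixes x y :: "'a::real_vector"
  assumes "j \<le> n" "0 < n"
  shows "x + (real j / real n) *\<^sub>R (y - x) \<in> closed_segment x y"
proof -
  have "0 \<le> real j / real n" "real j / real n \<le> 1" using assms by auto
  moreover have "x + (real j / real n) *\<^sub>R (y - x) = (1 - real j / real n) *\<^sub>R x + (real j / real n) *\<^sub>R y"
    by (simp add: algebra_simps)
  ultimately show ?thesis unfolding closed_segment_def by blast
qed

lemma grid_step:
  fixes x y :: "'a::real_vector"
  shows "x + (real j / real n) *\<^sub>R (y - x) - (x + (real (Suc j) / real n) *\<^sub>R (y - x)) = (1 / real n) *\<^sub>R (x - y)"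
proof -
  have "real (Suc j) / real n - real j / real n = 1 / real n"
    by (simp add: diff_divide_distrib[symmetric])
  then show ?thesis
    by (metis add_diff_cancel_left minus_diff_eq scaleR_left_diff_distrib scaleR_minus_right)
qed

lemma segment_grid_in_cover:
  fixes x y :: "'a::euclidean_space"
  assumes cover: "closed_segment x y \<subseteq> \<Union>\<G>" and open_\<G>: "\<And>G. G \<in> \<G> \<Longrightarrow> open G"
  obtains n :: nat where "0 < n"
    and "\<And>j. j < n \<Longrightarrow> \<exists>G\<in>\<G>. x + (real j / n) *\<^sub>R (y - x) \<in> G \<and> x + (real (Suc j) / n) *\<^sub>R (y - x) \<in> G"
proof -
  obtain \<epsilon> where "0 < \<epsilon>" and lebesgue: "\<And>p. p \<in> closed_segment x y \<Longrightarrow> \<exists>G\<in>\<G>. ball p \<epsilon> \<subseteq> G"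
    using Heine_Borel_lemma[OF compact_segment cover open_\<G>] by blast
  obtain n :: nat where n: "norm (x - y) / \<epsilon> < real n" using reals_Archimedean2 by blast
  moreover have "0 \<le> norm (x - y) / \<epsilon>" using \<open>0 < \<epsilon>\<close> by simp
  ultimately have "0 < real n" by linarith
  define p where "p j = x + (real j / real n) *\<^sub>R (y - x)" for j
  have "\<exists>G\<in>\<G>. p j \<in> G \<and> p (Suc j) \<in> G" if "j < n" for j
  proof -
    have "p j \<in> closed_segment x y"
      unfolding p_def using that \<open>0 < real n\<close> by (intro grid_mem_closed_segment) auto
    then obtain G where G: "G \<in> \<G>" "ball (p j) \<epsilon> \<subseteq> G" using lebesgue by blast
    have "dist (p j) (p (Suc j)) = norm ((1 / real n) *\<^sub>R (x - y))"
      unfolding dist_norm p_def grid_step ..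
    also have "\<dots> = norm (x - y) / real n" by simp
    also have "\<dots> < \<epsilon>" using n \<open>0 < \<epsilon>\<close> \<open>0 < real n\<close> by (simp add: field_simps)
    finally have "dist (p j) (p (Suc j)) < \<epsilon>" .
    then have "p j \<in> ball (p j) \<epsilon>" "p (Suc j) \<in> ball (p j) \<epsilon>" using \<open>0 < \<epsilon>\<close> by simp_all
    then show ?thesis using G by blast
  qed
  then show thesis using \<open>0 < real n\<close> unfolding p_def by (intro that) simp_all
qed

lemma lipschitz_of_local_lipschitz:
  fixes N :: "'a::euclidean_space \<Rightarrow> real" and F :: "'a \<Rightarrow> 'a"
  assumes norm: "is_norm N" and "convex X"
    and local: "\<forall>x\<in>X. \<exists>U. open U \<and> x \<in> U \<and>
               (\<forall>u\<in>U \<inter> X. \<forall>v\<in>U \<inter> X. dual_norm N (F u - F v) \<le> L * N (u - v))"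
    and x: "x \<in> X" and y: "y \<in> X"
  shows "dual_norm N (F x - F y) \<le> L * N (x - y)"
proof -
  define \<G> where "\<G> = {U. open U \<and> (\<forall>u\<in>U \<inter> X. \<forall>v\<in>U \<inter> X. dual_norm N (F u - F v) \<le> L * N (u - v))}"
  have seg: "closed_segment x y \<subseteq> X" using closed_segment_subset[OF x y \<open>convex X\<close>] .
  have open_\<G>: "\<And>G. G \<in> \<G> \<Longrightarrow> open G" by (simp add: \<G>_def)
  have cover: "closed_segment x y \<subseteq> \<Union>\<G>"
  proof
    fix q assume "q \<in> closed_segment x y"
    then have "q \<in> X" using seg by blast
    then show "q \<in> \<Union>\<G>" using bspec[OF local] unfolding \<G>_def by blast
  qed
  obtain n :: nat where "0 < n" and grid: "\<And>j. j < n \<Longrightarrow>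
      \<exists>G\<in>\<G>. x + (real j / n) *\<^sub>R (y - x) \<in> G \<and> x + (real (Suc j) / n) *\<^sub>R (y - x) \<in> G"
    using segment_grid_in_cover[OF cover open_\<G>] by blast
  define p where "p j = x + (real j / real n) *\<^sub>R (y - x)" for j
  have step: "dual_norm N (F (p j) - F (p (Suc j))) \<le> L * N (x - y) / real n" if j: "j < n" for j
  proof -
    obtain G where "G \<in> \<G>" "p j \<in> G" "p (Suc j) \<in> G" using grid[OF j] unfolding p_def by blast
    moreover have "p j \<in> closed_segment x y" "p (Suc j) \<in> closed_segment x y"
      unfolding p_def using j \<open>0 < n\<close> by (intro grid_mem_closed_segment; simp)+
    then have "p j \<in> X" "p (Suc j) \<in> X" using seg by auto
    ultimately have "dual_norm N (F (p j) - F (p (Suc j))) \<le> L * N (p j - p (Suc j))"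
      unfolding \<G>_def by blast
    also have "p j - p (Suc j) = (1 / real n) *\<^sub>R (x - y)" unfolding p_def by (rule grid_step)
    finally show ?thesis using \<open>0 < n\<close> by (simp add: is_norm_scaleR[OF norm])
  qed
  have "p 0 = x" "p n = y" using \<open>0 < n\<close> by (simp_all add: p_def)
  then show ?thesis
    using dual_norm_telescope_le[where g = "\<lambda>j. F (p j)" and n = n, OF norm step] \<open>0 < n\<close> by simp
qed

section \<open>Strong convexity of the Bregman distance\<close>

lemma le_of_le_minus_div_nat:
  fixes a b c :: real
  assumes "\<And>n::nat. 1 \<le> n \<Longrightarrow> b - c / real n \<le> a"
  shows "b \<le> a"
proof (rule LIMSEQ_le_const2)
  show "(\<lambda>n. b - c / real n) \<longlonglongrightarrow> b"
    using tendsto_diff[OF tendsto_const lim_const_over_n] by simp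
qed (use assms in blast)

text \<open>A Riemann-sum form of \<open>g 0 + c/2 \<le> \<integral>\<^sub>0\<^sup>1 g\<close>: along the segment only subgradient
  inequalities are available, not differentiability.\<close>

lemma subgradient_growth_bound:
  fixes \<phi> g :: "real \<Rightarrow> real" and c :: real
  assumes sub: "\<And>s t. s \<in> {0..1} \<Longrightarrow> t \<in> {0..1} \<Longrightarrow> \<phi> t + (s - t) * g t \<le> \<phi> s"
    and growth: "\<And>t. t \<in> {0..1} \<Longrightarrow> g 0 + c * t \<le> g t"
  shows "g 0 + c / 2 \<le> \<phi> 1 - \<phi> 0"
proof (rule le_of_le_minus_div_nat)
  fix n :: nat assume "1 \<le> n"
  then have n: "0 < real n" by simp
  have riemann: "real j / n * g 0 + c * (real j * (real j - 1)) / (2 * n\<^sup>2) \<le> \<phi> (real j / n) - \<phi> 0"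
    if "j \<le> n" for j
    using that
  proof (induction j)
    case (Suc j)
    have t: "real j / n \<in> {0..1}" "real (Suc j) / n \<in> {0..1}" using Suc.prems n by auto
    have h: "real (Suc j) / n - real j / n = 1 / n" using n by (simp add: field_simps)
    have "1 / n * (g 0 + c * (real j / n)) \<le> 1 / n * g (real j / n)"
      using growth[OF t(1)] n by (intro mult_left_mono) auto
    moreover have "\<phi> (real j / n) + 1 / n * g (real j / n) \<le> \<phi> (real (Suc j) / n)"
      using sub[OF t(2) t(1)] unfolding h by simp
    moreover have "real j / n * g 0 + c * (real j * (real j - 1)) / (2 * n\<^sup>2) + 1 / n * (g 0 + c * (real j / n))
        = real (Suc j) / n * g 0 + c * (real (Suc j) * (real (Suc j) - 1)) / (2 * n\<^sup>2)"
      using n by (simp add: field_simps power2_eq_square)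
    ultimately show ?case using Suc by linarith
  qed simp
  have "g 0 + c * (real n * (real n - 1)) / (2 * n\<^sup>2) \<le> \<phi> 1 - \<phi> 0"
    using riemann[of n] n by simp
  moreover have "c * (real n * (real n - 1)) / (2 * n\<^sup>2) = c / 2 - c / 2 / real n"
    using n by (simp add: field_simps power2_eq_square)
  ultimately show "g 0 + c / 2 - c / 2 / real n \<le> \<phi> 1 - \<phi> 0" by linarith
qed

lemma dgfD:
  assumes "dgf X N \<alpha> \<omega> dw"
  shows "0 < \<alpha>" "convex_on X \<omega>" "continuous_on X \<omega>" "convex (dom_sub X \<omega>)" "dom_sub X \<omega> \<subseteq> X"
    "\<And>x z. x \<in> dom_sub X \<omega> \<Longrightarrow> z \<in> X \<Longrightarrow> \<omega> x + inner (dw x) (z - x) \<le> \<omega> z"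
    "\<And>x x'. x \<in> dom_sub X \<omega> \<Longrightarrow> x' \<in> dom_sub X \<omega> \<Longrightarrow> \<alpha> * (N (x' - x))\<^sup>2 \<le> inner (dw x' - dw x) (x' - x)"
  using assms unfolding dgf_def dom_sub_def subdiff_def by auto

lemma bregman_ge_sq_norm_dom_sub:
  fixes N :: "'a::euclidean_space \<Rightarrow> real"
  assumes norm: "is_norm N" and dgf: "dgf X N \<alpha> \<omega> dw"
    and x: "x \<in> dom_sub X \<omega>" and z: "z \<in> dom_sub X \<omega>"
  shows "\<alpha> / 2 * (N (z - x))\<^sup>2 \<le> bregman \<omega> dw x z"
proof -
  note D = dgfD[OF dgf]
  define d where "d = z - x"
  define p where "p t = x + t *\<^sub>R d" for t
  have p_dom: "p t \<in> dom_sub X \<omega>" if "t \<in> {0..1}" for t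
  proof -
    have "p t = (1 - t) *\<^sub>R x + t *\<^sub>R z" by (simp add: p_def d_def algebra_simps)
    then show ?thesis using that D(4) x z by (simp add: convex_alt)
  qed
  have "inner (dw (p 0)) d + \<alpha> * (N d)\<^sup>2 / 2 \<le> \<omega> (p 1) - \<omega> (p 0)"
  proof (rule subgradient_growth_bound)
    fix s t :: real assume "s \<in> {0..1}" "t \<in> {0..1}"
    then show "\<omega> (p t) + (s - t) * inner (dw (p t)) d \<le> \<omega> (p s)"
      using D(6)[OF p_dom, of t "p s"] D(5) p_dom by (auto simp: p_def algebra_simps)
  next
    fix t :: real assume t: "t \<in> {0..1}"
    have "\<alpha> * (N (t *\<^sub>R d))\<^sup>2 \<le> inner (dw (p t) - dw (p 0)) (t *\<^sub>R d)"
      using D(7)[OF p_dom p_dom, of 0 t] t by (simp add: p_def)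
    then have "t * (\<alpha> * (N d)\<^sup>2 * t) \<le> t * inner (dw (p t) - dw (p 0)) d"
      using t by (simp add: is_norm_scaleR[OF norm] power2_eq_square algebra_simps)
    then have "\<alpha> * (N d)\<^sup>2 * t \<le> inner (dw (p t) - dw (p 0)) d" if "0 < t"
      using that by simp
    then show "inner (dw (p 0)) d + \<alpha> * (N d)\<^sup>2 * t \<le> inner (dw (p t)) d"
      using t by (cases "t = 0") (auto simp: inner_diff_left)
  qed
  then show ?thesis by (simp add: p_def d_def bregman_def)
qed

lemma continuous_attains_inf_quadratic_growth:
  fixes f :: "'a::euclidean_space \<Rightarrow> real"
  assumes "closed X" and z0: "z0 \<in> X" and f: "continuous_on X f" and "0 < a"
    and growth: "\<And>z. z \<in> X \<Longrightarrow> a * (norm (z - z0))\<^sup>2 - b * norm (z - z0) - B \<le> f z - f z0"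
  obtains z where "z \<in> X" "\<And>y. y \<in> X \<Longrightarrow> f z \<le> f y"
proof -
  define R where "R = (\<bar>b\<bar> + \<bar>B\<bar>) / a + 1"
  have far: "f z0 < f y" if y: "y \<in> X" "R < norm (y - z0)" for y
  proof -
    define r where "r = norm (y - z0)"
    have "(\<bar>b\<bar> + \<bar>B\<bar>) / a + 1 < r" using y by (simp add: r_def R_def)
    moreover have "0 \<le> (\<bar>b\<bar> + \<bar>B\<bar>) / a" using \<open>0 < a\<close> by simp
    ultimately have "1 \<le> r" "(\<bar>b\<bar> + \<bar>B\<bar>) / a < r" by linarith+
    then have "1 \<le> r" "\<bar>b\<bar> + \<bar>B\<bar> < a * r"
      using \<open>0 < a\<close> by (simp_all add: pos_divide_less_eq mult.commute)
    then have "(\<bar>b\<bar> + \<bar>B\<bar>) * r < (a * r) * r" by (intro mult_strict_right_mono) auto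
    moreover have "b * r \<le> \<bar>b\<bar> * r" "\<bar>B\<bar> * 1 \<le> \<bar>B\<bar> * r"
      using \<open>1 \<le> r\<close> by (intro mult_right_mono mult_left_mono; simp)+
    ultimately have "b * r + B < a * r\<^sup>2" by (simp add: power2_eq_square algebra_simps)
    then show ?thesis using growth[OF y(1)] by (simp add: r_def)
  qed
  have "compact (X \<inter> cball z0 R)" by (intro closed_Int_compact \<open>closed X\<close> compact_cball)
  moreover have "z0 \<in> X \<inter> cball z0 R" using z0 \<open>0 < a\<close> by (simp add: R_def)
  ultimately obtain z where z: "z \<in> X \<inter> cball z0 R" and min: "\<And>y. y \<in> X \<inter> cball z0 R \<Longrightarrow> f z \<le> f y"
    using continuous_attains_inf[OF _ _ continuous_on_subset[OF f inf_le1]] by blast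
  have "f z \<le> f y" if "y \<in> X" for y
  proof (cases "y \<in> cball z0 R")
    case False
    then have "f z0 < f y" using far[OF that] by (simp add: dist_norm norm_minus_commute)
    then show ?thesis using min \<open>z0 \<in> X \<inter> cball z0 R\<close> by fastforce
  qed (use min that in blast)
  with z that show thesis by blast
qed

lemma subgradient_at_argmin_plus_sq_dist:
  fixes f :: "'a::real_inner \<Rightarrow> real"
  assumes "convex X" "convex_on X f" "0 < \<epsilon>" and z: "z \<in> X"
    and min: "\<And>y. y \<in> X \<Longrightarrow> f z + (norm (z - w))\<^sup>2 / (2 * \<epsilon>) \<le> f y + (norm (y - w))\<^sup>2 / (2 * \<epsilon>)"
  shows "(1 / \<epsilon>) *\<^sub>R (w - z) \<in> subdiff X f z"
  unfolding subdiff_def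
proof (intro CollectI ballI)
  fix y assume y: "y \<in> X"
  define S where "S = inner (z - w) (y - z)"
  define Q where "Q = (norm (y - z))\<^sup>2"
  show "f z + inner ((1 / \<epsilon>) *\<^sub>R (w - z)) (y - z) \<le> f y"
  proof (rule le_of_le_minus_div_nat)
    fix n :: nat assume "1 \<le> n"
    define t where "t = 1 / real n"
    have t: "0 < t" "t \<le> 1" using \<open>1 \<le> n\<close> by (auto simp: t_def)
    have zt: "z + t *\<^sub>R (y - z) \<in> X"
      using convexD_alt[OF \<open>convex X\<close> z y, of t] t by (simp add: algebra_simps)
    have "f (z + t *\<^sub>R (y - z)) \<le> (1 - t) * f z + t * f y"
      using convex_onD[OF \<open>convex_on X f\<close>, of t z y] z y t by (simp add: algebra_simps)
    moreover have "(norm (z + t *\<^sub>R (y - z) - w))\<^sup>2 = (norm (z - w))\<^sup>2 + 2 * t * S + t\<^sup>2 * Q"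
      unfolding S_def Q_def power2_norm_eq_inner
      by (simp add: inner_diff_right inner_commute
          power2_eq_square algebra_simps)
    ultimately have "f z \<le> (1 - t) * f z + t * f y + (2 * t * S + t\<^sup>2 * Q) / (2 * \<epsilon>)"
      using min[OF zt] by (simp add: add_divide_distrib)
    then have "t * (2 * \<epsilon> * f z) \<le> t * (2 * \<epsilon> * f y + 2 * S + t * Q)"
      using \<open>0 < \<epsilon>\<close> by (simp add: field_simps power2_eq_square)
    then have "2 * \<epsilon> * f z \<le> 2 * \<epsilon> * f y + 2 * S + t * Q" using t by simp
    then have "f z \<le> f y + S / \<epsilon> + (Q / (2 * \<epsilon>)) / real n"
      using \<open>0 < \<epsilon>\<close> by (simp add: t_def field_simps)
    moreover have "inner ((1 / \<epsilon>) *\<^sub>R (w - z)) (y - z) = - (S / \<epsilon>)"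
      by (simp add: S_def inner_diff_left diff_divide_distrib)
    ultimately show "f z + inner ((1 / \<epsilon>) *\<^sub>R (w - z)) (y - z) - (Q / (2 * \<epsilon>)) / real n \<le> f y"
      by linarith
  qed
qed

lemma proximal_point_mem_dom_sub:
  fixes \<omega> :: "'a::euclidean_space \<Rightarrow> real"
  assumes "closed X" "convex X" "convex_on X \<omega>" "continuous_on X \<omega>" "dom_sub X \<omega> \<noteq> {}"
    and w: "w \<in> X" and "0 < \<epsilon>"
  obtains z where "z \<in> dom_sub X \<omega>" "\<omega> z + (norm (z - w))\<^sup>2 / (2 * \<epsilon>) \<le> \<omega> w"
proof -
  obtain x0 g where lower: "\<And>z. z \<in> X \<Longrightarrow> \<omega> x0 + inner g (z - x0) \<le> \<omega> z"
    using \<open>dom_sub X \<omega> \<noteq> {}\<close> unfolding dom_sub_def subdiff_def by auto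
  define h where "h z = \<omega> z + (norm (z - w))\<^sup>2 / (2 * \<epsilon>)" for z
  define B where "B = \<omega> w - \<omega> x0 - inner g (w - x0)"
  have growth: "1 / (2 * \<epsilon>) * (norm (z - w))\<^sup>2 - norm g * norm (z - w) - B \<le> h z - h w" if "z \<in> X" for z
  proof -
    have "inner g (z - x0) = inner g (z - w) + inner g (w - x0)" by (simp add: inner_diff_right)
    moreover have "- (norm g * norm (z - w)) \<le> inner g (z - w)"
      using Cauchy_Schwarz_ineq2[of g "z - w"] by linarith
    ultimately show ?thesis using lower[OF that] by (simp add: h_def B_def)
  qed
  have "continuous_on X h"
    unfolding h_def by (intro continuous_intros \<open>continuous_on X \<omega>\<close>) (use \<open>0 < \<epsilon>\<close> in auto)
  moreover have "0 < 1 / (2 * \<epsilon>)" using \<open>0 < \<epsilon>\<close> by simp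
  ultimately obtain z where z: "z \<in> X" and min: "\<And>y. y \<in> X \<Longrightarrow> h z \<le> h y"
    using continuous_attains_inf_quadratic_growth[OF \<open>closed X\<close> w _ _ growth] by blast
  have "z \<in> dom_sub X \<omega>"
    using subgradient_at_argmin_plus_sq_dist[OF \<open>convex X\<close> \<open>convex_on X \<omega>\<close> \<open>0 < \<epsilon>\<close> z, of w]
      min z unfolding dom_sub_def h_def by blast
  moreover have "h z \<le> h w" using min[OF w] .
  ultimately show thesis using that by (simp add: h_def)
qed

lemma subset_closure_dom_sub:
  fixes \<omega> :: "'a::euclidean_space \<Rightarrow> real"
  assumes "closed X" "convex X" "convex_on X \<omega>" "continuous_on X \<omega>" "dom_sub X \<omega> \<noteq> {}"
  shows "X \<subseteq> closure (dom_sub X \<omega>)"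
proof
  fix w assume w: "w \<in> X"
  obtain x0 g where lower: "\<And>z. z \<in> X \<Longrightarrow> \<omega> x0 + inner g (z - x0) \<le> \<omega> z"
    using \<open>dom_sub X \<omega> \<noteq> {}\<close> unfolding dom_sub_def subdiff_def by auto
  show "w \<in> closure (dom_sub X \<omega>)" unfolding closure_approachable
  proof (intro allI impI)
    fix e :: real assume "0 < e"
    define B where "B = \<bar>\<omega> w - \<omega> x0 - inner g (w - x0)\<bar>"
    define K where "K = B / e + norm g"
    define \<epsilon> where "\<epsilon> = e / (2 * (K + 1))"
    have "0 \<le> K" using \<open>0 < e\<close> by (simp add: K_def B_def)
    then have "0 < \<epsilon>" using \<open>0 < e\<close> by (simp add: \<epsilon>_def)
    have "2 * \<epsilon> * K = e * (K / (K + 1))" using \<open>0 \<le> K\<close> by (simp add: \<epsilon>_def field_simps)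
    also have "\<dots> < e * 1" using \<open>0 \<le> K\<close> \<open>0 < e\<close> by (intro mult_strict_left_mono) simp_all
    finally have \<epsilon>_small: "2 * \<epsilon> * K < e" by simp
    obtain z where z: "z \<in> dom_sub X \<omega>" and close: "\<omega> z + (norm (z - w))\<^sup>2 / (2 * \<epsilon>) \<le> \<omega> w"
      using proximal_point_mem_dom_sub[OF assms w \<open>0 < \<epsilon>\<close>] by blast
    have "norm (z - w) < e"
    proof (rule ccontr)
      define r where "r = norm (z - w)"
      assume "\<not> norm (z - w) < e"
      then have "e \<le> r" by (simp add: r_def)
      have "z \<in> X" using z unfolding dom_sub_def by blast
      have "inner g (z - x0) = inner g (z - w) + inner g (w - x0)" by (simp add: inner_diff_right)
      moreover have "- (norm g * r) \<le> inner g (z - w)"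
        using Cauchy_Schwarz_ineq2[of g "z - w"] by (simp add: r_def)
      ultimately have "r\<^sup>2 / (2 * \<epsilon>) \<le> norm g * r + B"
        using close lower[OF \<open>z \<in> X\<close>] by (simp add: r_def B_def)
      also have "\<dots> \<le> norm g * r + B * (r / e)"
        using \<open>e \<le> r\<close> \<open>0 < e\<close> mult_left_mono[of 1 "r / e" B] by (simp add: B_def)
      also have "\<dots> = K * r" by (simp add: K_def algebra_simps)
      finally have "r \<le> 2 * \<epsilon> * K"
        using \<open>0 < \<epsilon>\<close> \<open>0 < e\<close> \<open>e \<le> r\<close> by (simp add: field_simps power2_eq_square)
      then show False using \<epsilon>_small \<open>e \<le> r\<close> by linarith
    qed
    then show "\<exists>y\<in>dom_sub X \<omega>. dist y w < e" using z by (auto simp: dist_norm)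
  qed
qed

lemma bregman_ge_sq_norm:
  fixes N :: "'a::euclidean_space \<Rightarrow> real"
  assumes norm: "is_norm N" and dgf: "dgf X N \<alpha> \<omega> dw" and "closed X" "convex X"
    and x: "x \<in> dom_sub X \<omega>" and w: "w \<in> X"
  shows "\<alpha> / 2 * (N (w - x))\<^sup>2 \<le> bregman \<omega> dw x w"
proof -
  note D = dgfD[OF dgf]
  define f where "f z = bregman \<omega> dw x z - \<alpha> / 2 * (N (z - x))\<^sup>2" for z
  have "closure (dom_sub X \<omega>) \<subseteq> X" using D(5) \<open>closed X\<close> by (rule closure_minimal)
  moreover have "continuous_on X f" unfolding f_def bregman_def
    by (intro continuous_intros D(3) continuous_on_compose2[OF is_norm_continuous_on[OF norm]]) auto
  ultimately have "continuous_on (closure (dom_sub X \<omega>)) f" by (rule continuous_on_subset[rotated])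
  moreover have "w \<in> closure (dom_sub X \<omega>)"
    using subset_closure_dom_sub[OF \<open>closed X\<close> \<open>convex X\<close> D(2,3)] x w by blast
  ultimately have "0 \<le> f w"
  proof (rule continuous_ge_on_closure)
    fix z assume "z \<in> dom_sub X \<omega>"
    then show "0 \<le> f z" using bregman_ge_sq_norm_dom_sub[OF norm dgf x] by (simp add: f_def)
  qed
  then show ?thesis by (simp add: f_def)
qed

section \<open>The prox-mapping\<close>

lemma arg_min_on_minimal:
  fixes f :: "'a \<Rightarrow> 'b::linorder"
  assumes "z0 \<in> S" "\<And>z. z \<in> S \<Longrightarrow> f z0 \<le> f z"
  shows "arg_min_on f S \<in> S \<and> (\<forall>z\<in>S. f (arg_min_on f S) \<le> f z)"
  unfolding arg_min_on_def
  by (rule arg_minI[where P = "\<lambda>z. z \<in> S" and x = z0 and Q = "\<lambda>y. y \<in> S \<and> (\<forall>z\<in>S. f y \<le> f z)"])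
    (use assms in \<open>auto simp: not_less\<close>)

lemma prox_minimal:
  fixes N :: "'a::euclidean_space \<Rightarrow> real" and \<phi> :: 'a
  assumes norm: "is_norm N" and dgf: "dgf X N \<alpha> \<omega> dw" and "closed X" "convex X"
    and x: "x \<in> dom_sub X \<omega>"
  defines "f \<equiv> \<lambda>z. inner \<phi> z + bregman \<omega> dw x z"
  shows "prox X \<omega> dw x \<phi> \<in> X \<and> (\<forall>z\<in>X. f (prox X \<omega> dw x \<phi>) \<le> f z)"
proof -
  note D = dgfD[OF dgf]
  have "x \<in> X" using x D(5) by blast
  obtain c where "0 < c" and c: "\<And>v. c * norm v \<le> N v" using is_norm_ge_norm[OF norm] by blast
  have growth: "\<alpha> * c\<^sup>2 / 2 * (norm (z - x))\<^sup>2 - norm \<phi> * norm (z - x) - 0 \<le> f z - f x"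
    if "z \<in> X" for z
  proof -
    have "(c * norm (z - x))\<^sup>2 \<le> (N (z - x))\<^sup>2"
      using c[of "z - x"] \<open>0 < c\<close> by (intro power_mono) auto
    then have "\<alpha> / 2 * (c * norm (z - x))\<^sup>2 \<le> \<alpha> / 2 * (N (z - x))\<^sup>2"
      using D(1) by (intro mult_left_mono) auto
    then have "\<alpha> * c\<^sup>2 / 2 * (norm (z - x))\<^sup>2 \<le> bregman \<omega> dw x z"
      using bregman_ge_sq_norm[OF norm dgf \<open>closed X\<close> \<open>convex X\<close> x that]
      by (simp add: power_mult_distrib)
    moreover have "- (norm \<phi> * norm (z - x)) \<le> inner \<phi> (z - x)"
      using Cauchy_Schwarz_ineq2[of \<phi> "z - x"] by linarith
    ultimately show ?thesis by (simp add: f_def bregman_def inner_diff_right)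
  qed
  have "continuous_on X f" unfolding f_def bregman_def by (intro continuous_intros D(3))
  moreover have "0 < \<alpha> * c\<^sup>2 / 2" using D(1) \<open>0 < c\<close> by simp
  ultimately obtain z0 where "z0 \<in> X" "\<And>z. z \<in> X \<Longrightarrow> f z0 \<le> f z"
    using continuous_attains_inf_quadratic_growth[OF \<open>closed X\<close> \<open>x \<in> X\<close> _ _ growth] by blast
  then show ?thesis unfolding prox_def f_def by (rule arg_min_on_minimal)
qed

lemma prox_mem_dom_sub:
  fixes N :: "'a::euclidean_space \<Rightarrow> real"
  assumes norm: "is_norm N" and dgf: "dgf X N \<alpha> \<omega> dw" and "closed X" "convex X"
    and x: "x \<in> dom_sub X \<omega>"
  shows "prox X \<omega> dw x \<phi> \<in> dom_sub X \<omega>"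
proof -
  define y where "y = prox X \<omega> dw x \<phi>"
  note y = prox_minimal[OF assms, where \<phi> = \<phi>, folded y_def]
  have "\<omega> y + inner (dw x - \<phi>) (z - y) \<le> \<omega> z" if "z \<in> X" for z
  proof -
    have "inner \<phi> y + (\<omega> y - \<omega> x - inner (dw x) (y - x)) \<le> inner \<phi> z + (\<omega> z - \<omega> x - inner (dw x) (z - x))"
      using y that by (simp add: bregman_def)
    moreover have "inner (dw x - \<phi>) (z - y) = inner (dw x) (z - x) - inner (dw x) (y - x) - inner \<phi> z + inner \<phi> y"
      by (simp add: inner_diff_left inner_diff_right)
    ultimately show ?thesis by linarith
  qed
  then show ?thesis using y unfolding y_def[symmetric] dom_sub_def subdiff_def by blast
qed

section \<open>The line search\<close>

lemma ls_cond_of_step_le: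
  fixes N :: "'a::euclidean_space \<Rightarrow> real" and F :: "'a \<Rightarrow> 'a"
  assumes norm: "is_norm N" and dgf: "dgf X N \<alpha> \<omega> dw" and "closed X" "convex X"
    and lipschitz: "\<forall>x\<in>X. \<forall>y\<in>X. dual_norm N (F x - F y) \<le> L * N (x - y)"
    and x: "x \<in> dom_sub X \<omega>" and "0 < L" "0 < \<gamma>" "\<gamma> \<le> \<alpha> / (sqrt 2 * L)"
  shows "ls_cond X N \<alpha> \<omega> dw F x \<gamma>"
proof -
  note D = dgfD[OF dgf]
  define y where "y = prox X \<omega> dw x (\<gamma> *\<^sub>R F x)"
  have y: "y \<in> dom_sub X \<omega>" unfolding y_def using prox_mem_dom_sub[OF norm dgf \<open>closed X\<close> \<open>convex X\<close> x] .
  then have "x \<in> X" "y \<in> X" using x D(5) by auto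
  have "dual_norm N (F x - F y) \<le> L * N (x - y)" using lipschitz \<open>x \<in> X\<close> \<open>y \<in> X\<close> by blast
  then have "dual_norm N (F x - F y) \<le> L * N (y - x)" unfolding is_norm_minus_commute[OF norm, of x y] .
  then have "(dual_norm N (F x - F y))\<^sup>2 \<le> (L * N (y - x))\<^sup>2"
    by (rule power_mono) (rule dual_norm_nonneg[OF norm])
  then have "(dual_norm N (F x - F y))\<^sup>2 \<le> L\<^sup>2 * (N (y - x))\<^sup>2"
    by (simp add: power_mult_distrib)
  also have "\<dots> \<le> \<alpha> / \<gamma>\<^sup>2 * (\<alpha> / 2 * (N (y - x))\<^sup>2)"
  proof -
    have "(\<gamma> * (sqrt 2 * L))\<^sup>2 \<le> \<alpha>\<^sup>2"
      using assms(8,9) \<open>0 < L\<close> by (intro power_mono) (auto simp: field_simps)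
    then have "L\<^sup>2 \<le> \<alpha> / \<gamma>\<^sup>2 * (\<alpha> / 2)"
      using \<open>0 < \<gamma>\<close> by (simp add: power_mult_distrib field_simps power2_eq_square)
    from mult_right_mono[OF this zero_le_power2] show ?thesis by (simp add: mult.assoc)
  qed
  also have "\<dots> \<le> \<alpha> / \<gamma>\<^sup>2 * bregman \<omega> dw x y"
    using bregman_ge_sq_norm_dom_sub[OF norm dgf x y] D(1) by (intro mult_left_mono) auto
  finally show ?thesis unfolding ls_cond_def Let_def y_def .
qed

lemma neg_ls_run_mem_dom_sub:
  fixes N :: "'a::euclidean_space \<Rightarrow> real"
  assumes norm: "is_norm N" and dgf: "dgf X N \<alpha> \<omega> dw" and "closed X" "convex X"
    and x1: "x1 \<in> dom_sub X \<omega>" and run: "neg_ls_run X N \<alpha> \<omega> dw F x1 \<gamma>0 lam xs gs"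
  shows "active X N \<omega> dw F \<gamma>0 xs k \<Longrightarrow> xs k \<in> dom_sub X \<omega>"
proof (induction k)
  case (Suc k)
  show ?case
  proof (cases "k = 0")
    case True
    then show ?thesis using run x1 by (simp add: neg_ls_run_def)
  next
    case False
    then have "active X N \<omega> dw F \<gamma>0 xs k" using Suc.prems by (auto simp: active_def)
    then show ?thesis
      using Suc.IH run prox_mem_dom_sub[OF norm dgf \<open>closed X\<close> \<open>convex X\<close>] by (simp add: neg_ls_run_def)
  qed
qed (simp add: active_def)

lemma geometric_backtracking_bounds:
  fixes Q :: "nat \<Rightarrow> bool" and \<gamma>0 lam \<theta> :: real
  assumes "0 < \<gamma>0" "0 < lam" "lam < 1" "0 < \<theta>"
    and Q: "\<And>m. \<gamma>0 * lam ^ m \<le> \<theta> \<Longrightarrow> Q m"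
  shows "\<exists>m. Q m"
    and "real (LEAST m. Q m) \<le> max 1 (of_int \<lceil>log (1 / lam) (\<gamma>0 / \<theta>)\<rceil>)"
    and "min (lam * \<theta>) \<gamma>0 \<le> \<gamma>0 * lam ^ (LEAST m. Q m)"
proof -
  define m1 where "m1 = nat \<lceil>log (1 / lam) (\<gamma>0 / \<theta>)\<rceil>"
  have "\<gamma>0 / \<theta> = (1 / lam) powr log (1 / lam) (\<gamma>0 / \<theta>)"
    using assms by simp
  also have "\<dots> \<le> (1 / lam) powr real m1"
  proof (rule powr_mono)
    have "log (1 / lam) (\<gamma>0 / \<theta>) \<le> of_int \<lceil>log (1 / lam) (\<gamma>0 / \<theta>)\<rceil>" by (rule le_of_int_ceiling)
    then show "log (1 / lam) (\<gamma>0 / \<theta>) \<le> real m1" unfolding m1_def by linarith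
  qed (use assms in simp)
  also have "\<dots> = 1 / lam ^ m1"
    using assms by (simp add: powr_realpow power_one_over)
  finally have "\<gamma>0 * lam ^ m1 \<le> \<theta>"
    using assms by (simp add: field_simps)
  then have "Q m1" by (rule Q)
  then show "\<exists>m. Q m" ..
  have "(LEAST m. Q m) \<le> m1" using \<open>Q m1\<close> by (rule Least_le)
  then show "real (LEAST m. Q m) \<le> max 1 (of_int \<lceil>log (1 / lam) (\<gamma>0 / \<theta>)\<rceil>)"
    unfolding m1_def by linarith
  show "min (lam * \<theta>) \<gamma>0 \<le> \<gamma>0 * lam ^ (LEAST m. Q m)"
  proof (cases "LEAST m. Q m")
    case (Suc m)
    then have "\<not> Q m" by (metis lessI not_less_Least)
    then have "\<theta> < \<gamma>0 * lam ^ m" using Q by force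
    then have "lam * \<theta> \<le> \<gamma>0 * lam ^ Suc m" using assms by (simp add: algebra_simps)
    then show ?thesis using Suc by simp
  qed simp
qed

lemma greatest_geometric_eq_least:
  fixes P :: "real \<Rightarrow> bool" and \<gamma>0 lam :: real
  assumes "0 \<le> \<gamma>0" "0 \<le> lam" "lam \<le> 1" and "\<exists>m. P (\<gamma>0 * lam ^ m)"
  shows "(GREATEST g. g \<in> range (\<lambda>m::nat. \<gamma>0 * lam ^ m) \<and> P g) = \<gamma>0 * lam ^ (LEAST m. P (\<gamma>0 * lam ^ m))"
proof (rule Greatest_equality)
  show "\<gamma>0 * lam ^ (LEAST m. P (\<gamma>0 * lam ^ m)) \<in> range (\<lambda>m. \<gamma>0 * lam ^ m)
      \<and> P (\<gamma>0 * lam ^ (LEAST m. P (\<gamma>0 * lam ^ m)))"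
    using LeastI_ex[OF assms(4)] by blast
next
  fix g assume "g \<in> range (\<lambda>m::nat. \<gamma>0 * lam ^ m) \<and> P g"
  then obtain m where "g = \<gamma>0 * lam ^ m" "P (\<gamma>0 * lam ^ m)" by auto
  moreover from this have "(LEAST m. P (\<gamma>0 * lam ^ m)) \<le> m" by (intro Least_le)
  ultimately show "g \<le> \<gamma>0 * lam ^ (LEAST m. P (\<gamma>0 * lam ^ m))"
    using assms by (simp add: mult_left_mono power_decreasing)
qed

lemma neg_ls_run_lipschitz_bounds:
  fixes N :: "'a::euclidean_space \<Rightarrow> real" and F :: "'a \<Rightarrow> 'a"
  assumes norm: "is_norm N" and dgf: "dgf X N \<alpha> \<omega> dw" and "closed X" "convex X"
    and x1: "x1 \<in> dom_sub X \<omega>" and \<gamma>0: "0 < \<gamma>0" and lam: "0 < lam" "lam < 1"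
    and run: "neg_ls_run X N \<alpha> \<omega> dw F x1 \<gamma>0 lam xs gs"
    and "0 < L" and lipschitz: "\<forall>x\<in>X. \<forall>y\<in>X. dual_norm N (F x - F y) \<le> L * N (x - y)"
    and act: "active X N \<omega> dw F \<gamma>0 xs k"
  shows "\<exists>m::nat. ls_cond X N \<alpha> \<omega> dw F (xs k) (\<gamma>0 * lam ^ m)"
    and "real (LEAST m::nat. ls_cond X N \<alpha> \<omega> dw F (xs k) (\<gamma>0 * lam ^ m))
           \<le> max 1 (of_int \<lceil>log (1 / lam) (sqrt 2 * \<gamma>0 * L / \<alpha>)\<rceil>)"
    and "min (lam * \<alpha> / (sqrt 2 * L)) \<gamma>0 \<le> gs k"
proof -
  have "xs k \<in> dom_sub X \<omega>"
    using neg_ls_run_mem_dom_sub[OF norm dgf \<open>closed X\<close> \<open>convex X\<close> x1 run act] .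
  then have small_step: "ls_cond X N \<alpha> \<omega> dw F (xs k) (\<gamma>0 * lam ^ m)"
    if "\<gamma>0 * lam ^ m \<le> \<alpha> / (sqrt 2 * L)" for m
    using ls_cond_of_step_le[OF norm dgf \<open>closed X\<close> \<open>convex X\<close> lipschitz _ \<open>0 < L\<close> _ that] \<gamma>0 lam
    by simp
  have "0 < \<alpha> / (sqrt 2 * L)" using dgfD(1)[OF dgf] \<open>0 < L\<close> by simp
  note bounds = geometric_backtracking_bounds
    [where Q = "\<lambda>m. ls_cond X N \<alpha> \<omega> dw F (xs k) (\<gamma>0 * lam ^ m)", OF \<gamma>0 lam this small_step]
  show exists: "\<exists>m::nat. ls_cond X N \<alpha> \<omega> dw F (xs k) (\<gamma>0 * lam ^ m)"
    by (rule bounds(1))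
  have step_ratio: "\<gamma>0 / (\<alpha> / (sqrt 2 * L)) = sqrt 2 * \<gamma>0 * L / \<alpha>" by simp
  from bounds(2) show "real (LEAST m::nat. ls_cond X N \<alpha> \<omega> dw F (xs k) (\<gamma>0 * lam ^ m))
      \<le> max 1 (of_int \<lceil>log (1 / lam) (sqrt 2 * \<gamma>0 * L / \<alpha>)\<rceil>)"
    unfolding step_ratio .
  have "gs k = \<gamma>0 * lam ^ (LEAST m. ls_cond X N \<alpha> \<omega> dw F (xs k) (\<gamma>0 * lam ^ m))"
    using run act greatest_geometric_eq_least[OF _ _ _ exists] \<gamma>0 lam by (simp add: neg_ls_run_def)
  with bounds(3) show "min (lam * \<alpha> / (sqrt 2 * L)) \<gamma>0 \<le> gs k" by simp
qed

theorem proposition5: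
  fixes X :: "'a::euclidean_space set" and N :: "'a \<Rightarrow> real" and F :: "'a \<Rightarrow> 'a"
    and \<omega> :: "'a \<Rightarrow> real" and dw :: "'a \<Rightarrow> 'a" and \<alpha> \<gamma>0 lam :: real
    and x1 :: 'a and xs :: "nat \<Rightarrow> 'a" and gs :: "nat \<Rightarrow> real"
  assumes norm: "is_norm N"
    and X: "X \<noteq> {}" "closed X" "convex X"
    and Fcont: "continuous_on X F"
    and dgf: "dgf X N \<alpha> \<omega> dw"
    and x1: "x1 \<in> dom_sub X \<omega>"
    and \<gamma>0: "0 < \<gamma>0" "\<gamma>0 < 1" and lam: "0 < lam" "lam < 1"
    and run: "neg_ls_run X N \<alpha> \<omega> dw F x1 \<gamma>0 lam xs gs"
  shows
    "(\<forall>L>0. (\<forall>x\<in>X. \<exists>U. open U \<and> x \<in> U \<and>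
               (\<forall>u\<in>U \<inter> X. \<forall>v\<in>U \<inter> X. dual_norm N (F u - F v) \<le> L * N (u - v))) \<longrightarrow>
        (\<forall>k. active X N \<omega> dw F \<gamma>0 xs k \<longrightarrow> (\<exists>m::nat. ls_cond X N \<alpha> \<omega> dw F (xs k) (\<gamma>0 * lam ^ m)))
      \<and> (\<exists>K::nat. \<exists>\<gamma>s>0. \<forall>k\<ge>K. active X N \<omega> dw F \<gamma>0 xs k \<longrightarrow> gs k \<ge> \<gamma>s))
   \<and> (\<forall>L>0. (\<forall>x\<in>X. \<forall>y\<in>X. dual_norm N (F x - F y) \<le> L * N (x - y)) \<longrightarrow>
        (\<forall>k. active X N \<omega> dw F \<gamma>0 xs k \<longrightarrow>
            real (LEAST m::nat. ls_cond X N \<alpha> \<omega> dw F (xs k) (\<gamma>0 * lam ^ m))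
              \<le> max 1 (of_int \<lceil>log (1 / lam) (sqrt 2 * \<gamma>0 * L / \<alpha>)\<rceil>)
          \<and> gs k \<ge> min (lam * \<alpha> / (sqrt 2 * L)) \<gamma>0))"
proof (intro conjI allI impI)
  fix L :: real assume "0 < L"
  note bounds = neg_ls_run_lipschitz_bounds[OF norm dgf X(2,3) x1 \<gamma>0(1) lam run \<open>0 < L\<close>]
  have "0 < min (lam * \<alpha> / (sqrt 2 * L)) \<gamma>0" using lam \<gamma>0 \<open>0 < L\<close> dgfD(1)[OF dgf] by simp
  moreover assume "\<forall>x\<in>X. \<exists>U. open U \<and> x \<in> U \<and>
    (\<forall>u\<in>U \<inter> X. \<forall>v\<in>U \<inter> X. dual_norm N (F u - F v) \<le> L * N (u - v))"
  then have lipschitz: "\<forall>x\<in>X. \<forall>y\<in>X. dual_norm N (F x - F y) \<le> L * N (x - y)"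
    using lipschitz_of_local_lipschitz[OF norm X(3)] by blast
  ultimately show "\<exists>K::nat. \<exists>\<gamma>s>0. \<forall>k\<ge>K. active X N \<omega> dw F \<gamma>0 xs k \<longrightarrow> gs k \<ge> \<gamma>s"
    using bounds(3)[OF lipschitz] by blast
  show "\<exists>m::nat. ls_cond X N \<alpha> \<omega> dw F (xs k) (\<gamma>0 * lam ^ m)"
    if "active X N \<omega> dw F \<gamma>0 xs k" for k
    using bounds(1)[OF lipschitz that] .
next
  fix L :: real and k assume "0 < L"
    and "\<forall>x\<in>X. \<forall>y\<in>X. dual_norm N (F x - F y) \<le> L * N (x - y)" "active X N \<omega> dw F \<gamma>0 xs k"
  from neg_ls_run_lipschitz_bounds[OF norm dgf X(2,3) x1 \<gamma>0(1) lam run this]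
  show "real (LEAST m::nat. ls_cond X N \<alpha> \<omega> dw F (xs k) (\<gamma>0 * lam ^ m))
          \<le> max 1 (of_int \<lceil>log (1 / lam) (sqrt 2 * \<gamma>0 * L / \<alpha>)\<rceil>)"
    and "gs k \<ge> min (lam * \<alpha> / (sqrt 2 * L)) \<gamma>0" by auto
qed

end
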